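(* Let $X$ be a homogeneous chain that is not simple. The following are equivalent: (1) the topological group $(\mathrm{Aut}(X),\tau_p)$ (respectively $(\mathrm{Aut}(X),\tau_\partial)$) is Roelcke precompact; (2) for every proper regular interval $J$ of $X$ the topological groups $(\mathrm{Aut}(J),\tau_p)$ (respectively $(\mathrm{Aut}(J),\tau_\partial)$) and $(\mathrm{Aut}(X/J),\tau_\partial)$ are Roelcke precompact; (3) there exists a proper regular interval $J$ of $X$ such that the topological groups $(\mathrm{Aut}(J),\tau_p)$ (respectively $(\mathrm{Aut}(J),\tau_\partial)$) and $(\mathrm{Aut}(X/J),\tau_\partial)$ are Roelcke precompact.
   Context: Chain: linearly ordered set; $\mathrm{Aut}(Y)$: group of order-preserving bijections; $X$ homogeneous: $\mathrm{Aut}(X)$ acts transitively. An interval is a convex subset; $J$ is regular if for all $x,y\in J$, $g\in\mathrm{Aut}(X)$, $g(x)\in J\Rightarrow g(y)\in J$; proper if neither a singleton nor $X$. A homogeneous chain is simple if it has no proper regular interval. For a proper regular interval $J$, $X/J$ is the chain of equivalence classes of the relation $x\sim_J y\iff\forall g\in\mathrm{Aut}(X)\,(g(x)\in J\Rightarrow g(y)\in J)$ (these classes are the images of $J$ under automorphisms), with the induced order. $\tau_p$: pointwise convergence topology w.r.t. the order topology; $\tau_\partial$: permutation topology (identity neighbourhood base: pointwise stabilizers of finite sets). Roelcke precompact: the Roelcke uniformity (greatest lower bound of left and right uniformities) is totally bounded. *)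

theory Defs
  imports Main
begin

text \<open>Automorphisms are order-preserving bijections of S,
  made extensional (identity outside S) so that they form a group under composition.\<close>

definition Aut :: "'a set \<Rightarrow> 'a rel \<Rightarrow> ('a \<Rightarrow> 'a) set" where
  "Aut S r = {f. bij_betw f S S \<and> (\<forall>x\<in>S. \<forall>y\<in>S. (x, y) \<in> r \<longleftrightarrow> (f x, f y) \<in> r)
                 \<and> (\<forall>x. x \<notin> S \<longrightarrow> f x = x)}"

definition homogeneous_chain :: "'a set \<Rightarrow> 'a rel \<Rightarrow> bool" where
  "homogeneous_chain S r \<longleftrightarrow> linear_order_on S r \<and> (\<forall>x\<in>S. \<forall>y\<in>S. \<exists>g\<in>Aut S r. g x = y)"

definition chain_interval :: "'a set \<Rightarrow> 'a rel \<Rightarrow> 'a set \<Rightarrow> bool" where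
  "chain_interval S r J \<longleftrightarrow> J \<subseteq> S \<and> J \<noteq> {} \<and>
     (\<forall>x\<in>J. \<forall>z\<in>J. \<forall>y\<in>S. (x, y) \<in> r \<and> (y, z) \<in> r \<longrightarrow> y \<in> J)"

definition regular_interval :: "'a set \<Rightarrow> 'a rel \<Rightarrow> 'a set \<Rightarrow> bool" where
  "regular_interval S r J \<longleftrightarrow> chain_interval S r J \<and>
     (\<forall>x\<in>J. \<forall>y\<in>J. \<forall>g\<in>Aut S r. g x \<in> J \<longrightarrow> g y \<in> J)"

definition proper_interval :: "'a set \<Rightarrow> 'a set \<Rightarrow> bool" where
  "proper_interval S J \<longleftrightarrow> J \<noteq> S \<and> \<not> (\<exists>x. J = {x})"

definition simple_chain :: "'a set \<Rightarrow> 'a rel \<Rightarrow> bool" where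
  "simple_chain S r \<longleftrightarrow> homogeneous_chain S r \<and>
     \<not> (\<exists>J. regular_interval S r J \<and> proper_interval S J)"

definition restrict_rel :: "'a rel \<Rightarrow> 'a set \<Rightarrow> 'a rel" where
  "restrict_rel r J = r \<inter> (J \<times> J)"

definition reg_equiv :: "'a set \<Rightarrow> 'a rel \<Rightarrow> 'a set \<Rightarrow> 'a \<Rightarrow> 'a \<Rightarrow> bool" where
  "reg_equiv S r J x y \<longleftrightarrow> x \<in> S \<and> y \<in> S \<and> (\<forall>g\<in>Aut S r. g x \<in> J \<longrightarrow> g y \<in> J)"

definition quot_carrier :: "'a set \<Rightarrow> 'a rel \<Rightarrow> 'a set \<Rightarrow> 'a set set" where
  "quot_carrier S r J = {{y \<in> S. reg_equiv S r J x y} | x. x \<in> S}"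

definition quot_rel :: "'a set \<Rightarrow> 'a rel \<Rightarrow> 'a set \<Rightarrow> 'a set rel" where
  "quot_rel S r J = {(C, D). C \<in> quot_carrier S r J \<and> D \<in> quot_carrier S r J \<and>
      (C = D \<or> (\<forall>c\<in>C. \<forall>d\<in>D. (c, d) \<in> r))}"

text \<open>Order topology: a is in the interior of V, i.e. V contains an open interval
  (possibly unbounded on either side) around a with endpoints in S.\<close>
definition order_lt :: "'a rel \<Rightarrow> 'a \<Rightarrow> 'a \<Rightarrow> bool" where
  "order_lt r x y \<longleftrightarrow> (x, y) \<in> r \<and> x \<noteq> y"

definition order_nbhd :: "'a set \<Rightarrow> 'a rel \<Rightarrow> 'a \<Rightarrow> 'a set \<Rightarrow> bool" where
  "order_nbhd S r a V \<longleftrightarrow> a \<in> S \<and>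
     (\<exists>lo hi. (\<forall>l. lo = Some l \<longrightarrow> l \<in> S \<and> order_lt r l a) \<and>
              (\<forall>h. hi = Some h \<longrightarrow> h \<in> S \<and> order_lt r a h) \<and>
              {y \<in> S. (\<forall>l. lo = Some l \<longrightarrow> order_lt r l y) \<and>
                     (\<forall>h. hi = Some h \<longrightarrow> order_lt r y h)} \<subseteq> V)"

text \<open>Identity neighbourhoods in Aut(S) for tau_p (pointwise convergence w.r.t. the order
  topology) and tau_partial (permutation topology).\<close>
definition nbhd_p :: "'a set \<Rightarrow> 'a rel \<Rightarrow> ('a \<Rightarrow> 'a) set \<Rightarrow> bool" where
  "nbhd_p S r U \<longleftrightarrow> U \<subseteq> Aut S r \<and>
     (\<exists>A W. finite A \<and> A \<subseteq> S \<and> (\<forall>a\<in>A. order_nbhd S r a (W a)) \<and>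
            {g \<in> Aut S r. \<forall>a\<in>A. g a \<in> W a} \<subseteq> U)"

definition nbhd_perm :: "'a set \<Rightarrow> 'a rel \<Rightarrow> ('a \<Rightarrow> 'a) set \<Rightarrow> bool" where
  "nbhd_perm S r U \<longleftrightarrow> U \<subseteq> Aut S r \<and>
     (\<exists>A. finite A \<and> A \<subseteq> S \<and> {g \<in> Aut S r. \<forall>a\<in>A. g a = a} \<subseteq> U)"

text \<open>Roelcke precompactness: the Roelcke uniformity (entourages {(x,y). y \<in> U x U},
  U an identity neighbourhood) is totally bounded.\<close>
definition roelcke_precompact :: "('a \<Rightarrow> 'a) set \<Rightarrow> (('a \<Rightarrow> 'a) set \<Rightarrow> bool) \<Rightarrow> bool" where
  "roelcke_precompact G N \<longleftrightarrow> (\<forall>U. N U \<longrightarrow>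
     (\<exists>F. finite F \<and> F \<subseteq> G \<and> G \<subseteq> {u \<circ> f \<circ> v | u f v. u \<in> U \<and> f \<in> F \<and> v \<in> U}))"

definition RP_p :: "'a set \<Rightarrow> 'a rel \<Rightarrow> bool" where
  "RP_p S r \<longleftrightarrow> roelcke_precompact (Aut S r) (nbhd_p S r)"

definition RP_perm :: "'a set \<Rightarrow> 'a rel \<Rightarrow> bool" where
  "RP_perm S r \<longleftrightarrow> roelcke_precompact (Aut S r) (nbhd_perm S r)"

end

(*
  Fix a proper regular interval J. Its images under Aut X are convex blocks partitioning X,
  and X/J is the chain of these blocks. Choosing for every block C an automorphism shift C
  with shift C ` J = C identifies Aut X with the wreath product of Aut J by Aut (X/J): every g
  is determined by the permutation g/J of the blocks together with its components on the
  blocks, transported back to J.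

  Both topologies are pointwise topologies, so the Roelcke condition only has to be checked on
  basic identity neighbourhoods, which constrain finitely many points. If Aut X is Roelcke
  precompact, so is Aut J (restrict the elements stabilising J) and so is Aut (X/J) (the
  projection g \<mapsto> g/J is split by lifting). Conversely, write g/J = u1 f u2 with u1, u2 fixing
  the finitely many blocks of the given points and f from a finite set, and then decompose the
  components of g in Aut J on the finitely many blocks these points see on either side of f.
*)

theory Submission
  imports Defs "HOL-Library.FuncSet"
begin

section \<open>Chains and their automorphisms\<close>

definition aut_inv :: "'a set \<Rightarrow> ('a \<Rightarrow> 'a) \<Rightarrow> 'a \<Rightarrow> 'a" where
  "aut_inv S g = (\<lambda>x. if x \<in> S then inv_into S g x else x)"

definition id_outside :: "'a set \<Rightarrow> ('a \<Rightarrow> 'a) \<Rightarrow> 'a \<Rightarrow> 'a" where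
  "id_outside J f = (\<lambda>x. if x \<in> J then f x else x)"

lemma id_outside_comp: "g ` J \<subseteq> J \<Longrightarrow> id_outside J (f \<circ> g) = id_outside J f \<circ> id_outside J g"
  unfolding id_outside_def by (rule ext) auto

lemma order_lt_converse: "order_lt (r\<inverse>) x y \<longleftrightarrow> order_lt r y x"
  unfolding order_lt_def by auto

lemma Aut_converse: "Aut S (r\<inverse>) = Aut S r"
  unfolding Aut_def by auto

lemma chain_interval_converse: "chain_interval S (r\<inverse>) J \<longleftrightarrow> chain_interval S r J"
  unfolding chain_interval_def by auto

lemma restrict_rel_converse: "restrict_rel (r\<inverse>) J = (restrict_rel r J)\<inverse>"
  unfolding restrict_rel_def by auto

lemma restrict_rel_less_iff:
  "x \<in> J \<Longrightarrow> y \<in> J \<Longrightarrow> order_lt (restrict_rel r J) x y \<longleftrightarrow> order_lt r x y"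
  unfolding order_lt_def restrict_rel_def by blast

locale chain =
  fixes S :: "'a set" and r :: "'a rel"
  assumes linear: "linear_order_on S r"
begin

lemma le_refl: "x \<in> S \<Longrightarrow> (x, x) \<in> r"
  using linear unfolding order_on_defs refl_on_def by blast

lemma le_trans: "(x, y) \<in> r \<Longrightarrow> (y, z) \<in> r \<Longrightarrow> (x, z) \<in> r"
  using linear unfolding order_on_defs trans_def by blast

lemma le_antisym: "(x, y) \<in> r \<Longrightarrow> (y, x) \<in> r \<Longrightarrow> x = y"
  using linear unfolding order_on_defs antisym_def by blast

lemma le_total: "x \<in> S \<Longrightarrow> y \<in> S \<Longrightarrow> (x, y) \<in> r \<or> (y, x) \<in> r"
  using linear le_refl unfolding order_on_defs total_on_def by (cases "x = y") auto

lemma less_imp_not_le: "order_lt r x y \<Longrightarrow> (y, x) \<notin> r"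
  unfolding order_lt_def using le_antisym by blast

lemma le_less_trans: "(x, y) \<in> r \<Longrightarrow> order_lt r y z \<Longrightarrow> order_lt r x z"
  unfolding order_lt_def using le_trans le_antisym by blast

lemma Aut_in_carrier: "g \<in> Aut S r \<Longrightarrow> x \<in> S \<Longrightarrow> g x \<in> S"
  unfolding Aut_def bij_betw_def by blast

lemma Aut_fixes_outside: "g \<in> Aut S r \<Longrightarrow> x \<notin> S \<Longrightarrow> g x = x"
  unfolding Aut_def by blast

lemma Aut_in_carrier_iff: "g \<in> Aut S r \<Longrightarrow> g x \<in> S \<longleftrightarrow> x \<in> S"
  using Aut_in_carrier Aut_fixes_outside by metis

lemma Aut_le_iff: "g \<in> Aut S r \<Longrightarrow> x \<in> S \<Longrightarrow> y \<in> S \<Longrightarrow> (g x, g y) \<in> r \<longleftrightarrow> (x, y) \<in> r"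
  unfolding Aut_def by blast

lemma Aut_image: "g \<in> Aut S r \<Longrightarrow> g ` S = S"
  unfolding Aut_def bij_betw_def by blast

lemma Aut_inj: "g \<in> Aut S r \<Longrightarrow> inj g"
proof (rule injI)
  fix x y assume g: "g \<in> Aut S r" and "g x = g y"
  moreover have "inj_on g S" using g unfolding Aut_def bij_betw_def by blast
  ultimately show "x = y"
    using Aut_in_carrier_iff[OF g] Aut_fixes_outside[OF g] by (metis inj_onD)
qed

lemma Aut_less_iff:
  "g \<in> Aut S r \<Longrightarrow> x \<in> S \<Longrightarrow> y \<in> S \<Longrightarrow> order_lt r (g x) (g y) \<longleftrightarrow> order_lt r x y"
  unfolding order_lt_def using Aut_le_iff Aut_inj by (metis injD)

lemma AutI:
  assumes "\<And>x. x \<in> S \<Longrightarrow> f x \<in> S" and "\<And>y. y \<in> S \<Longrightarrow> \<exists>x\<in>S. f x = y"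
    and "\<And>x y. x \<in> S \<Longrightarrow> y \<in> S \<Longrightarrow> order_lt r x y \<Longrightarrow> order_lt r (f x) (f y)"
    and "\<And>x. x \<notin> S \<Longrightarrow> f x = x"
  shows "f \<in> Aut S r"
proof -
  have le_iff: "(f x, f y) \<in> r \<longleftrightarrow> (x, y) \<in> r" if "x \<in> S" "y \<in> S" for x y
  proof (cases "x = y")
    case True
    then show ?thesis using assms(1) le_refl that by simp
  next
    case False
    then have "order_lt r x y \<or> order_lt r y x" using le_total that unfolding order_lt_def by blast
    then show ?thesis using assms(3) that less_imp_not_le by (metis order_lt_def)
  qed
  then have "inj_on f S"
    using le_refl le_antisym by (intro inj_onI) metis
  then have "bij_betw f S S"
    unfolding bij_betw_def using assms(1,2) by blast
  then show ?thesis
    unfolding Aut_def using le_iff assms(4) by blast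
qed

lemma id_in_Aut: "id \<in> Aut S r"
  unfolding Aut_def by auto

lemma Aut_comp: assumes g: "g \<in> Aut S r" and h: "h \<in> Aut S r" shows "g \<circ> h \<in> Aut S r"
  unfolding Aut_def
proof (intro CollectI conjI ballI allI impI)
  show "bij_betw (g \<circ> h) S S" using bij_betw_trans g h unfolding Aut_def by blast
  show "(x, y) \<in> r \<longleftrightarrow> ((g \<circ> h) x, (g \<circ> h) y) \<in> r" if "x \<in> S" "y \<in> S" for x y
    using Aut_le_iff Aut_in_carrier g h that by simp
  show "(g \<circ> h) x = x" if "x \<notin> S" for x using Aut_fixes_outside[OF h that] Aut_fixes_outside[OF g that] by simp
qed

lemma aut_inv_apply: "g \<in> Aut S r \<Longrightarrow> aut_inv S g (g x) = x"
proof (cases "x \<in> S")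
  case True
  assume g: "g \<in> Aut S r"
  then have "inj_on g S" unfolding Aut_def bij_betw_def by blast
  then show ?thesis using True Aut_in_carrier[OF g] unfolding aut_inv_def by simp
qed (simp add: Aut_fixes_outside aut_inv_def)

lemma apply_aut_inv: "g \<in> Aut S r \<Longrightarrow> g (aut_inv S g x) = x"
proof (cases "x \<in> S")
  case True
  assume g: "g \<in> Aut S r"
  then have "x \<in> g ` S" using True Aut_image by blast
  then show ?thesis using True unfolding aut_inv_def by (simp add: f_inv_into_f)
qed (simp add: Aut_fixes_outside aut_inv_def)

lemma aut_inv_in_carrier: "g \<in> Aut S r \<Longrightarrow> x \<in> S \<Longrightarrow> aut_inv S g x \<in> S"
  by (metis Aut_in_carrier_iff apply_aut_inv)

lemma aut_inv_in_Aut: assumes g: "g \<in> Aut S r" shows "aut_inv S g \<in> Aut S r"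
proof (rule AutI)
  show "\<exists>x\<in>S. aut_inv S g x = y" if "y \<in> S" for y
    using g that aut_inv_apply Aut_in_carrier by blast
  show "order_lt r (aut_inv S g x) (aut_inv S g y)" if "x \<in> S" "y \<in> S" "order_lt r x y" for x y
    using Aut_less_iff[OF g] apply_aut_inv[OF g] aut_inv_in_carrier[OF g] that by metis
qed (use g aut_inv_in_carrier in \<open>auto simp: aut_inv_def\<close>)

lemma aut_inv_comp: "g \<in> Aut S r \<Longrightarrow> aut_inv S g \<circ> g = id"
  using aut_inv_apply by fastforce

lemma comp_aut_inv: "g \<in> Aut S r \<Longrightarrow> g \<circ> aut_inv S g = id"
  using apply_aut_inv by fastforce

lemma aut_inv_image: assumes "g \<in> Aut S r" "g ` A = B" shows "aut_inv S g ` B = A"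
  using aut_inv_comp[OF assms(1)] unfolding assms(2)[symmetric] by (simp add: image_comp)

lemma chain_converse: "chain S (r\<inverse>)"
  using linear by unfold_locales simp

lemma chain_restrict: "J \<subseteq> S \<Longrightarrow> chain J (restrict_rel r J)"
  using linear unfolding restrict_rel_def
  by unfold_locales (simp add: order_on_defs refl_on_def trans_def antisym_def total_on_def, blast)

lemma chain_interval_in_carrier: "chain_interval S r C \<Longrightarrow> x \<in> C \<Longrightarrow> x \<in> S"
  unfolding chain_interval_def by blast

lemma chain_interval_side:
  assumes "chain_interval S r C" "y \<in> S" "y \<notin> C"
  shows "(\<forall>c\<in>C. (c, y) \<in> r) \<or> (\<forall>c\<in>C. (y, c) \<in> r)"
  using assms le_total unfolding chain_interval_def by blast

lemma chain_intervals_disjoint: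
  assumes "chain_interval S r C" "chain_interval S r D" "C \<inter> D = {}"
  shows "(\<forall>c\<in>C. \<forall>d\<in>D. (c, d) \<in> r) \<or> (\<forall>c\<in>C. \<forall>d\<in>D. (d, c) \<in> r)"
proof (rule ccontr)
  assume "\<not> ?thesis"
  then obtain c d c' d' where cd: "c \<in> C" "d \<in> D" "(c, d) \<notin> r" "c' \<in> C" "d' \<in> D" "(d', c') \<notin> r"
    by blast
  have "d \<notin> C" "c' \<notin> D" using assms(3) cd by blast+
  moreover have "d \<in> S" "c' \<in> S" using assms(1,2) cd chain_interval_in_carrier by blast+
  ultimately have "(d, c') \<in> r" "(c', d) \<in> r"
    using chain_interval_side[OF assms(1), of d] chain_interval_side[OF assms(2), of c'] cd by blast+
  then show False using le_antisym assms(3) cd by blast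
qed

lemma chain_interval_less_outside:
  assumes "chain_interval S r J" "x \<in> J" "x' \<in> J" "y \<in> S" "y \<notin> J"
  shows "order_lt r x y \<longleftrightarrow> order_lt r x' y"
  using chain_interval_side[OF assms(1,4,5)] assms(2,3,5) less_imp_not_le
  unfolding order_lt_def by blast

lemma chain_interval_greater_outside:
  assumes "chain_interval S r J" "x \<in> J" "x' \<in> J" "y \<in> S" "y \<notin> J"
  shows "order_lt r y x \<longleftrightarrow> order_lt r y x'"
  using chain_interval_side[OF assms(1,4,5)] assms(2,3,5) less_imp_not_le
  unfolding order_lt_def by blast

lemma Aut_interval_in_Aut:
  assumes J: "chain_interval S r J" and k: "k \<in> Aut J (restrict_rel r J)"
  shows "k \<in> Aut S r"
proof -
  interpret J: chain J "restrict_rel r J"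
    using chain_restrict J unfolding chain_interval_def by blast
  have JS: "J \<subseteq> S" using J unfolding chain_interval_def by blast
  have k_out: "k x = x" if "x \<notin> J" for x using J.Aut_fixes_outside[OF k that] .
  show ?thesis
  proof (rule AutI)
    show "k x \<in> S" if "x \<in> S" for x
      using that JS J.Aut_in_carrier[OF k] k_out by (cases "x \<in> J") auto
    show "\<exists>x\<in>S. k x = y" if "y \<in> S" for y
    proof (cases "y \<in> J")
      case True
      then show ?thesis using JS J.Aut_image[OF k] by (metis imageE subsetD)
    qed (use that k_out in auto)
    show "k x = x" if "x \<notin> S" for x using that JS k_out by blast
    show "order_lt r (k x) (k y)" if "x \<in> S" "y \<in> S" "order_lt r x y" for x y
    proof (cases "x \<in> J"; cases "y \<in> J")
      assume "x \<in> J" "y \<in> J"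
      then show ?thesis
        using that J.Aut_less_iff[OF k] J.Aut_in_carrier[OF k] restrict_rel_less_iff by metis
    next
      assume "x \<in> J" "y \<notin> J"
      then show ?thesis
        using that k_out J.Aut_in_carrier[OF k] chain_interval_less_outside[OF J] by metis
    next
      assume "x \<notin> J" "y \<in> J"
      then show ?thesis
        using that k_out J.Aut_in_carrier[OF k] chain_interval_greater_outside[OF J] by metis
    qed (use that k_out in simp)
  qed
qed

lemma id_outside_in_Aut:
  assumes "J \<subseteq> S" and g: "g \<in> Aut S r" and "g ` J = J"
  shows "id_outside J g \<in> Aut J (restrict_rel r J)"
proof -
  interpret J: chain J "restrict_rel r J" using chain_restrict assms(1) .
  show ?thesis
  proof (rule J.AutI)
    show "order_lt (restrict_rel r J) (id_outside J g x) (id_outside J g y)"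
      if "x \<in> J" "y \<in> J" "order_lt (restrict_rel r J) x y" for x y
    proof -
      have "x \<in> S" "y \<in> S" "g x \<in> J" "g y \<in> J" using that assms by auto
      then show ?thesis
        using that Aut_less_iff[OF g] restrict_rel_less_iff[of x J y r]
          restrict_rel_less_iff[of "g x" J "g y" r]
        unfolding id_outside_def by simp
    qed
    show "\<exists>x\<in>J. id_outside J g x = y" if "y \<in> J" for y
    proof -
      have "y \<in> g ` J" using that assms(3) by simp
      then obtain x where "x \<in> J" "g x = y" by blast
      then show ?thesis unfolding id_outside_def by auto
    qed
  qed (use assms in \<open>auto simp: id_outside_def\<close>)
qed

end

section \<open>The order topology\<close>

(* An optional strict lower bound, None meaning unbounded. Upper bounds are lower bounds for the
   converse order, so one argument serves both ends of an interval. *)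
definition above_opt :: "'a rel \<Rightarrow> 'a option \<Rightarrow> 'a \<Rightarrow> bool" where
  "above_opt r lo y \<longleftrightarrow> (\<forall>l. lo = Some l \<longrightarrow> order_lt r l y)"

lemma order_nbhd_iff:
  "order_nbhd S r a V \<longleftrightarrow> a \<in> S \<and>
     (\<exists>lo hi. set_option lo \<subseteq> S \<and> above_opt r lo a \<and> set_option hi \<subseteq> S \<and> above_opt (r\<inverse>) hi a \<and>
        {y \<in> S. above_opt r lo y \<and> above_opt (r\<inverse>) hi y} \<subseteq> V)"
proof -
  have bound: "set_option lo \<subseteq> S \<and> (\<forall>l. lo = Some l \<longrightarrow> P l) \<and> R \<longleftrightarrow>
      (\<forall>l. lo = Some l \<longrightarrow> l \<in> S \<and> P l) \<and> R" for lo :: "'a option" and P R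
    by auto
  show ?thesis
    unfolding order_nbhd_def above_opt_def order_lt_converse by (simp only: bound)
qed

lemma above_opt_restrict_iff:
  "set_option lo \<subseteq> J \<Longrightarrow> y \<in> J \<Longrightarrow> above_opt (restrict_rel r J) lo y \<longleftrightarrow> above_opt r lo y"
  unfolding above_opt_def using restrict_rel_less_iff by fastforce

lemma order_nbhd_mono: "order_nbhd S r a V \<Longrightarrow> V \<subseteq> V' \<Longrightarrow> order_nbhd S r a V'"
  unfolding order_nbhd_def by blast

context chain
begin

lemma above_opt_merge:
  assumes "set_option lo1 \<subseteq> S" "set_option lo2 \<subseteq> S"
  obtains lo where "lo \<in> {lo1, lo2}"
    and "\<And>y. above_opt r lo y \<Longrightarrow> above_opt r lo1 y \<and> above_opt r lo2 y"
proof -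
  have "\<exists>lo\<in>{lo1, lo2}. \<forall>y. above_opt r lo y \<longrightarrow> above_opt r lo1 y \<and> above_opt r lo2 y"
  proof (cases lo1; cases lo2)
    fix l1 l2 assume l: "lo1 = Some l1" "lo2 = Some l2"
    then have "(l1, l2) \<in> r \<or> (l2, l1) \<in> r" using assms le_total by simp
    then show ?thesis using le_less_trans l unfolding above_opt_def by auto
  qed (auto simp: above_opt_def)
  then show thesis using that by blast
qed

lemma above_opt_image:
  assumes g: "g \<in> Aut S r" and "set_option lo \<subseteq> S" "y \<in> S"
  shows "above_opt r (map_option g lo) (g y) \<longleftrightarrow> above_opt r lo y"
  using assms Aut_less_iff[OF g] unfolding above_opt_def by auto

lemma above_opt_restrict:
  assumes J: "chain_interval S r J" and "set_option lo \<subseteq> S" "above_opt r lo b" "b \<in> J" "y \<in> J"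
    and "above_opt (restrict_rel r J) (if set_option lo \<subseteq> J then lo else None) y"
  shows "above_opt r lo y"
  using assms chain_interval_greater_outside[OF J, of b y] restrict_rel_less_iff[of _ J y r]
  unfolding above_opt_def by (cases lo) (auto split: if_splits)

lemma order_nbhd_Int:
  assumes "order_nbhd S r a V" "order_nbhd S r a V'"
  shows "order_nbhd S r a (V \<inter> V')"
proof -
  obtain lo hi lo' hi' where a: "a \<in> S"
    and lo: "set_option lo \<subseteq> S" "above_opt r lo a" "set_option lo' \<subseteq> S" "above_opt r lo' a"
    and hi: "set_option hi \<subseteq> S" "above_opt (r\<inverse>) hi a" "set_option hi' \<subseteq> S" "above_opt (r\<inverse>) hi' a"
    and V: "{y \<in> S. above_opt r lo y \<and> above_opt (r\<inverse>) hi y} \<subseteq> V"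
    and V': "{y \<in> S. above_opt r lo' y \<and> above_opt (r\<inverse>) hi' y} \<subseteq> V'"
    using assms unfolding order_nbhd_iff by blast
  obtain lo'' where "lo'' \<in> {lo, lo'}"
    and lo'': "\<And>y. above_opt r lo'' y \<Longrightarrow> above_opt r lo y \<and> above_opt r lo' y"
    using above_opt_merge[OF lo(1,3)] by blast
  moreover obtain hi'' where "hi'' \<in> {hi, hi'}"
    and hi'': "\<And>y. above_opt (r\<inverse>) hi'' y \<Longrightarrow> above_opt (r\<inverse>) hi y \<and> above_opt (r\<inverse>) hi' y"
    using chain.above_opt_merge[OF chain_converse hi(1,3)] by blast
  ultimately show ?thesis
    unfolding order_nbhd_iff using a lo hi V V' by (intro conjI exI[of _ lo''] exI[of _ hi'']) auto
qed

lemma order_nbhd_image: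
  assumes g: "g \<in> Aut S r" and "order_nbhd S r a V"
  shows "order_nbhd S r (g a) (g ` V)"
proof -
  obtain lo hi where a: "a \<in> S" and lo: "set_option lo \<subseteq> S" "above_opt r lo a"
    and hi: "set_option hi \<subseteq> S" "above_opt (r\<inverse>) hi a"
    and V: "{y \<in> S. above_opt r lo y \<and> above_opt (r\<inverse>) hi y} \<subseteq> V"
    using assms(2) unfolding order_nbhd_iff by blast
  note lo_image = above_opt_image[OF g lo(1)]
  note hi_image = chain.above_opt_image[OF chain_converse, unfolded Aut_converse, OF g hi(1)]
  have "y \<in> g ` V"
    if "y \<in> S" "above_opt r (map_option g lo) y" "above_opt (r\<inverse>) (map_option g hi) y" for y
  proof -
    have "aut_inv S g y \<in> V"
      using that V lo_image hi_image aut_inv_in_carrier[OF g] apply_aut_inv[OF g] by (metis (lifting) mem_Collect_eq subsetD)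
    then show ?thesis using apply_aut_inv[OF g] by (metis imageI)
  qed
  then show ?thesis
    unfolding order_nbhd_iff using a lo hi lo_image[OF a] hi_image[OF a] Aut_in_carrier[OF g]
    by (intro conjI exI[of _ "map_option g lo"] exI[of _ "map_option g hi"]) auto
qed

lemma order_nbhd_restrict:
  assumes J: "chain_interval S r J" and b: "b \<in> J" and "order_nbhd S r b V"
  shows "order_nbhd J (restrict_rel r J) b (V \<inter> J)"
proof -
  obtain lo hi where lo: "set_option lo \<subseteq> S" "above_opt r lo b"
    and hi: "set_option hi \<subseteq> S" "above_opt (r\<inverse>) hi b"
    and V: "{y \<in> S. above_opt r lo y \<and> above_opt (r\<inverse>) hi y} \<subseteq> V"
    using assms(3) unfolding order_nbhd_iff by blast
  define lo' where "lo' = (if set_option lo \<subseteq> J then lo else None)"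
  define hi' where "hi' = (if set_option hi \<subseteq> J then hi else None)"
  have J': "chain_interval S (r\<inverse>) J" using J chain_interval_converse by blast
  have "y \<in> V"
    if "y \<in> J" "above_opt (restrict_rel r J) lo' y" "above_opt ((restrict_rel r J)\<inverse>) hi' y" for y
    using that V above_opt_restrict[OF J lo b]
      chain.above_opt_restrict[OF chain_converse J' hi b, unfolded restrict_rel_converse]
      chain_interval_in_carrier[OF J]
    unfolding lo'_def hi'_def by blast
  moreover have "above_opt (restrict_rel r J) lo' b"
    using lo(2) above_opt_restrict_iff[OF _ b] unfolding lo'_def by (auto simp: above_opt_def)
  moreover have "above_opt ((restrict_rel r J)\<inverse>) hi' b"
    using hi(2) above_opt_restrict_iff[OF _ b, of hi "r\<inverse>"]
    unfolding hi'_def restrict_rel_converse by (auto simp: above_opt_def)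
  ultimately show ?thesis
    unfolding order_nbhd_iff using b
    by (intro conjI exI[of _ lo'] exI[of _ hi']) (auto simp: lo'_def hi'_def)
qed

lemma order_nbhd_extend:
  assumes J: "chain_interval S r J" and "order_nbhd J (restrict_rel r J) b V"
  shows "order_nbhd S r b (V \<union> (S - J))"
proof -
  have JS: "J \<subseteq> S" using J unfolding chain_interval_def by blast
  obtain lo hi where b: "b \<in> J" and lo: "set_option lo \<subseteq> J" "above_opt (restrict_rel r J) lo b"
    and hi: "set_option hi \<subseteq> J" "above_opt ((restrict_rel r J)\<inverse>) hi b"
    and V: "{y \<in> J. above_opt (restrict_rel r J) lo y \<and> above_opt ((restrict_rel r J)\<inverse>) hi y} \<subseteq> V"
    using assms(2) unfolding order_nbhd_iff by blast
  note restrict_iff = above_opt_restrict_iff[OF lo(1)]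
    above_opt_restrict_iff[OF hi(1), of _ "r\<inverse>", unfolded restrict_rel_converse]
  show ?thesis
    unfolding order_nbhd_iff using b lo hi V JS restrict_iff
    by (intro conjI exI[of _ lo] exI[of _ hi]) auto
qed

end

section \<open>Roelcke precompactness through basic neighbourhoods\<close>

definition basic_nbhd :: "'a set \<Rightarrow> 'a rel \<Rightarrow> 'a set \<Rightarrow> ('a \<Rightarrow> 'a set) \<Rightarrow> ('a \<Rightarrow> 'a) set" where
  "basic_nbhd S r A W = {g \<in> Aut S r. \<forall>a\<in>A. g a \<in> W a}"

definition double_cosets :: "('a \<Rightarrow> 'a) set \<Rightarrow> ('a \<Rightarrow> 'a) set \<Rightarrow> ('a \<Rightarrow> 'a) set" where
  "double_cosets U F = {u \<circ> f \<circ> v | u f v. u \<in> U \<and> f \<in> F \<and> v \<in> U}"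

definition finitely_many_double_cosets :: "('a \<Rightarrow> 'a) set \<Rightarrow> ('a \<Rightarrow> 'a) set \<Rightarrow> bool" where
  "finitely_many_double_cosets G U \<longleftrightarrow> (\<exists>F. finite F \<and> F \<subseteq> G \<and> G \<subseteq> double_cosets U F)"

(* T S r a V says that V is a neighbourhood of a in the chain S. *)
definition roelcke_precompact_basic ::
    "('a set \<Rightarrow> 'a rel \<Rightarrow> 'a \<Rightarrow> 'a set \<Rightarrow> bool) \<Rightarrow> 'a set \<Rightarrow> 'a rel \<Rightarrow> bool" where
  "roelcke_precompact_basic T S r \<longleftrightarrow> (\<forall>A W. finite A \<and> A \<subseteq> S \<and> (\<forall>a\<in>A. T S r a (W a)) \<longrightarrow>
     finitely_many_double_cosets (Aut S r) (basic_nbhd S r A W))"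

(* Neighbourhoods in the discrete topology, whose pointwise topology is the permutation topology. *)
definition perm_nbhd :: "'a set \<Rightarrow> 'a rel \<Rightarrow> 'a \<Rightarrow> 'a set \<Rightarrow> bool" where
  "perm_nbhd S r a V \<longleftrightarrow> a \<in> V"

lemma basic_nbhd_subset_Aut: "basic_nbhd S r A W \<subseteq> Aut S r"
  unfolding basic_nbhd_def by blast

lemma double_cosetsI: "u \<in> U \<Longrightarrow> f \<in> F \<Longrightarrow> v \<in> U \<Longrightarrow> g = u \<circ> f \<circ> v \<Longrightarrow> g \<in> double_cosets U F"
  unfolding double_cosets_def by blast

lemma double_cosetsE:
  "g \<in> double_cosets U F \<Longrightarrow> (\<And>u f v. u \<in> U \<Longrightarrow> f \<in> F \<Longrightarrow> v \<in> U \<Longrightarrow> g = u \<circ> f \<circ> v \<Longrightarrow> P) \<Longrightarrow> P"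
  unfolding double_cosets_def by blast

lemma double_cosets_mono: "U \<subseteq> U' \<Longrightarrow> double_cosets U F \<subseteq> double_cosets U' F"
  unfolding double_cosets_def by blast

lemma finitely_many_double_cosets_mono:
  "finitely_many_double_cosets G U \<Longrightarrow> U \<subseteq> U' \<Longrightarrow> finitely_many_double_cosets G U'"
  unfolding finitely_many_double_cosets_def by (meson double_cosets_mono order_trans)

lemma finitely_many_double_cosetsE:
  assumes "finitely_many_double_cosets G U"
  obtains F where "finite F" "F \<subseteq> G" "\<And>g. g \<in> G \<Longrightarrow> g \<in> double_cosets U F"
  using assms unfolding finitely_many_double_cosets_def by blast

lemma roelcke_precompact_iff:
  "roelcke_precompact G N \<longleftrightarrow> (\<forall>U. N U \<longrightarrow> finitely_many_double_cosets G U)"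
  unfolding roelcke_precompact_def finitely_many_double_cosets_def double_cosets_def ..

lemma roelcke_precompact_basicD:
  "roelcke_precompact_basic T S r \<Longrightarrow> finite A \<Longrightarrow> A \<subseteq> S \<Longrightarrow> \<forall>a\<in>A. T S r a (W a) \<Longrightarrow>
    finitely_many_double_cosets (Aut S r) (basic_nbhd S r A W)"
  unfolding roelcke_precompact_basic_def by blast

lemma RP_p_iff_basic: "RP_p S r \<longleftrightarrow> roelcke_precompact_basic order_nbhd S r"
proof
  assume "RP_p S r"
  moreover have "nbhd_p S r (basic_nbhd S r A W)"
    if "finite A" "A \<subseteq> S" "\<forall>a\<in>A. order_nbhd S r a (W a)" for A W
    using that unfolding nbhd_p_def basic_nbhd_def by blast
  ultimately show "roelcke_precompact_basic order_nbhd S r"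
    unfolding RP_p_def roelcke_precompact_iff roelcke_precompact_basic_def by blast
next
  assume basic: "roelcke_precompact_basic order_nbhd S r"
  have "finitely_many_double_cosets (Aut S r) U" if U: "nbhd_p S r U" for U
  proof -
    obtain A W where "finite A" "A \<subseteq> S" "\<forall>a\<in>A. order_nbhd S r a (W a)"
      and "basic_nbhd S r A W \<subseteq> U"
      using U unfolding nbhd_p_def basic_nbhd_def by blast
    then show ?thesis
      using roelcke_precompact_basicD[OF basic] finitely_many_double_cosets_mono by metis
  qed
  then show "RP_p S r" unfolding RP_p_def roelcke_precompact_iff by blast
qed

lemma RP_perm_iff_stabilizers:
  "RP_perm S r \<longleftrightarrow> (\<forall>A. finite A \<and> A \<subseteq> S \<longrightarrow>
     finitely_many_double_cosets (Aut S r) (basic_nbhd S r A (\<lambda>a. {a})))"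
proof
  assume "RP_perm S r"
  moreover have "nbhd_perm S r (basic_nbhd S r A (\<lambda>a. {a}))" if "finite A" "A \<subseteq> S" for A
    using that unfolding nbhd_perm_def basic_nbhd_def by blast
  ultimately show "\<forall>A. finite A \<and> A \<subseteq> S \<longrightarrow>
      finitely_many_double_cosets (Aut S r) (basic_nbhd S r A (\<lambda>a. {a}))"
    unfolding RP_perm_def roelcke_precompact_iff by blast
next
  assume stab: "\<forall>A. finite A \<and> A \<subseteq> S \<longrightarrow>
      finitely_many_double_cosets (Aut S r) (basic_nbhd S r A (\<lambda>a. {a}))"
  have "finitely_many_double_cosets (Aut S r) U" if U: "nbhd_perm S r U" for U
  proof -
    obtain A where "finite A" "A \<subseteq> S" "basic_nbhd S r A (\<lambda>a. {a}) \<subseteq> U"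
      using U unfolding nbhd_perm_def basic_nbhd_def by auto
    then show ?thesis using stab finitely_many_double_cosets_mono by blast
  qed
  then show "RP_perm S r" unfolding RP_perm_def roelcke_precompact_iff by blast
qed

lemma RP_perm_iff_basic: "RP_perm S r \<longleftrightarrow> roelcke_precompact_basic perm_nbhd S r"
proof -
  have "basic_nbhd S r A (\<lambda>a. {a}) \<subseteq> basic_nbhd S r A W" if "\<forall>a\<in>A. a \<in> W a" for A W
    using that unfolding basic_nbhd_def by auto
  then show ?thesis
    unfolding RP_perm_iff_stabilizers roelcke_precompact_basic_def perm_nbhd_def
    using finitely_many_double_cosets_mono by (smt (verit) singletonI)
qed

section \<open>The quotient by a regular interval\<close>

locale regular_quotient = chain X r for X :: "'a set" and r :: "'a rel" +
  fixes J :: "'a set"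
  assumes homogeneous: "\<forall>x\<in>X. \<forall>y\<in>X. \<exists>g\<in>Aut X r. g x = y"
    and regular: "regular_interval X r J"
    and proper: "proper_interval X J"
begin

abbreviation "G \<equiv> Aut X r"
abbreviation "rJ \<equiv> restrict_rel r J"
abbreviation "XJ \<equiv> quot_carrier X r J"
abbreviation "rXJ \<equiv> quot_rel X r J"

lemma J_interval: "chain_interval X r J"
  using regular unfolding regular_interval_def by blast

lemma J_subset: "J \<subseteq> X"
  using J_interval unfolding chain_interval_def by blast

lemma J_nonempty: "J \<noteq> {}"
  using J_interval unfolding chain_interval_def by blast

lemma chain_J: "chain J rJ"
  using chain_restrict J_subset .

lemma regular_image:
  assumes g: "g \<in> G" and x: "x \<in> J" and gx: "g x \<in> J"
  shows "g ` J = J"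
proof
  show "g ` J \<subseteq> J" using regular x g gx unfolding regular_interval_def by blast
  show "J \<subseteq> g ` J"
  proof
    fix y assume y: "y \<in> J"
    have "aut_inv X g (g x) \<in> J" using x aut_inv_apply[OF g] by simp
    then have "aut_inv X g y \<in> J"
      using regular gx y aut_inv_in_Aut[OF g] unfolding regular_interval_def by blast
    then show "y \<in> g ` J" using apply_aut_inv[OF g] by (metis imageI)
  qed
qed

lemma J_reflect:
  assumes x: "x \<in> J" and j: "j \<in> J"
  shows "\<exists>x'\<in>J. (order_lt r j x \<longrightarrow> order_lt r x x') \<and> (order_lt r x j \<longrightarrow> order_lt r x' x)"
proof -
  obtain g where g: "g \<in> G" "g x = j" using homogeneous x j J_subset by blast
  have ginv: "aut_inv X g \<in> G" and "aut_inv X g ` J = J"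
    using aut_inv_in_Aut[OF g(1)] aut_inv_image[OF g(1) regular_image[OF g(1) x]] g(2) j by auto
  then have "aut_inv X g x \<in> J" using x by blast
  moreover have "aut_inv X g j = x" using aut_inv_apply[OF g(1)] g(2) by blast
  ultimately show ?thesis using Aut_less_iff[OF ginv] x j J_subset by (metis subsetD)
qed

lemma J_unbounded: "x \<in> J \<Longrightarrow> (\<exists>l\<in>J. order_lt r l x) \<and> (\<exists>h\<in>J. order_lt r x h)"
proof -
  assume x: "x \<in> J"
  obtain j where j: "j \<in> J" "j \<noteq> x" using proper x unfolding proper_interval_def by blast
  then have "order_lt r j x \<or> order_lt r x j"
    using le_total x J_subset unfolding order_lt_def by blast
  then show ?thesis using J_reflect[OF x j(1)] j(1) by blast
qed

lemma order_nbhd_J: "x \<in> J \<Longrightarrow> order_nbhd X r x J"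
proof -
  assume x: "x \<in> J"
  then obtain l h where l: "l \<in> J" "order_lt r l x" and h: "h \<in> J" "order_lt r x h"
    using J_unbounded by blast
  have "y \<in> J" if "y \<in> X" "order_lt r l y" "order_lt r y h" for y
    using J_interval l h that unfolding chain_interval_def order_lt_def by blast
  then show ?thesis
    unfolding order_nbhd_def using x l h J_subset by (intro conjI exI[of _ "Some l"] exI[of _ "Some h"]) auto
qed

definition block :: "'a \<Rightarrow> 'a set" where
  "block x = {y \<in> X. reg_equiv X r J x y}"

lemma quot_carrier_eq: "XJ = block ` X"
  unfolding quot_carrier_def block_def by blast

lemma exists_Aut_into_J: "x \<in> X \<Longrightarrow> \<exists>g\<in>G. g x \<in> J"
  using homogeneous J_nonempty J_subset by (metis ex_in_conv subsetD)

lemma block_eq: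
  assumes x: "x \<in> X" and g: "g \<in> G" and gx: "g x \<in> J"
  shows "block x = {y \<in> X. g y \<in> J}"
proof
  show "block x \<subseteq> {y \<in> X. g y \<in> J}"
    unfolding block_def reg_equiv_def using g gx by blast
  have "h y \<in> J" if y: "y \<in> X" "g y \<in> J" and h: "h \<in> G" "h x \<in> J" for h y
  proof -
    have "h \<circ> aut_inv X g \<in> G" using Aut_comp[OF h(1) aut_inv_in_Aut[OF g]] .
    then have "h (aut_inv X g (g y)) \<in> J"
      using regular gx y(2) h(2) aut_inv_apply[OF g] unfolding regular_interval_def by (metis comp_apply)
    then show ?thesis using aut_inv_apply[OF g] by simp
  qed
  then show "{y \<in> X. g y \<in> J} \<subseteq> block x"
    unfolding block_def reg_equiv_def using x by blast
qed

lemma block_eq_image: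
  assumes x: "x \<in> X" and g: "g \<in> G" and gx: "g x \<in> J"
  shows "block x = aut_inv X g ` J"
proof -
  have "g ` block x = J"
  proof
    show "g ` block x \<subseteq> J" using block_eq[OF assms] by auto
    show "J \<subseteq> g ` block x"
    proof
      fix j assume "j \<in> J"
      then have "aut_inv X g j \<in> block x"
        using block_eq[OF assms] J_subset apply_aut_inv[OF g] aut_inv_in_carrier[OF g] by auto
      then show "j \<in> g ` block x" using apply_aut_inv[OF g] by (metis imageI)
    qed
  qed
  then show ?thesis using aut_inv_image[OF g] by blast
qed

lemma block_subset: "block x \<subseteq> X"
  unfolding block_def by blast

lemma block_self: "x \<in> X \<Longrightarrow> x \<in> block x"
  using exists_Aut_into_J block_eq by blast

lemma block_eq_block: "x \<in> X \<Longrightarrow> y \<in> block x \<Longrightarrow> block y = block x"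
  using exists_Aut_into_J block_eq by (metis (no_types, lifting) mem_Collect_eq)

lemma block_image: assumes g: "g \<in> G" and x: "x \<in> X" shows "g ` block x = block (g x)"
proof -
  obtain h where h: "h \<in> G" "h (g x) \<in> J"
    using exists_Aut_into_J Aut_in_carrier[OF g x] by blast
  have gx: "block (g x) = {z \<in> X. h z \<in> J}"
    using block_eq[OF Aut_in_carrier[OF g x] h] .
  have "block x = {y \<in> X. h (g y) \<in> J}"
    using block_eq[OF x Aut_comp[OF h(1) g]] h(2) by simp
  moreover have "z \<in> g ` {y \<in> X. h (g y) \<in> J}" if "z \<in> X" "h z \<in> J" for z
  proof -
    have "aut_inv X g z \<in> X" "g (aut_inv X g z) = z"
      using that aut_inv_in_carrier[OF g] apply_aut_inv[OF g] by auto
    then show ?thesis using that(2) by (metis (mono_tags, lifting) imageI mem_Collect_eq)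
  qed
  ultimately show ?thesis
    unfolding gx using Aut_in_carrier[OF g] by auto
qed

lemma block_interval: "x \<in> X \<Longrightarrow> chain_interval X r (block x)"
proof -
  assume x: "x \<in> X"
  then obtain g where g: "g \<in> G" "g x \<in> J" using exists_Aut_into_J by blast
  have "y \<in> block x" if "a \<in> block x" "b \<in> block x" "y \<in> X" "(a, y) \<in> r" "(y, b) \<in> r" for a b y
    using that J_interval Aut_le_iff[OF g(1)] Aut_in_carrier[OF g(1)] block_eq[OF x g]
    unfolding chain_interval_def by auto
  then show ?thesis
    unfolding chain_interval_def using block_subset block_self[OF x] by blast
qed

lemma block_in_quot: "x \<in> X \<Longrightarrow> block x \<in> XJ"
  unfolding quot_carrier_eq by blast

lemma quot_carrierE: "C \<in> XJ \<Longrightarrow> (\<And>x. x \<in> X \<Longrightarrow> C = block x \<Longrightarrow> P) \<Longrightarrow> P"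
  unfolding quot_carrier_eq by blast

lemma block_of_member: "C \<in> XJ \<Longrightarrow> x \<in> C \<Longrightarrow> block x = C"
  using block_eq_block by (metis quot_carrierE)

lemma quot_subset: "C \<in> XJ \<Longrightarrow> C \<subseteq> X"
  using block_subset by (metis quot_carrierE)

lemma quot_nonempty: "C \<in> XJ \<Longrightarrow> C \<noteq> {}"
  using block_self by (metis quot_carrierE empty_iff)

lemma quot_interval: "C \<in> XJ \<Longrightarrow> chain_interval X r C"
  using block_interval by (metis quot_carrierE)

lemma quot_disjoint: "C \<in> XJ \<Longrightarrow> D \<in> XJ \<Longrightarrow> C \<noteq> D \<Longrightarrow> C \<inter> D = {}"
  using block_of_member by blast

lemma quot_rel_iff:
  assumes C: "C \<in> XJ" and D: "D \<in> XJ" and "C \<noteq> D" and x: "x \<in> C" and y: "y \<in> D"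
  shows "(C, D) \<in> rXJ \<longleftrightarrow> (x, y) \<in> r"
proof
  assume "(C, D) \<in> rXJ"
  then show "(x, y) \<in> r" using assms unfolding quot_rel_def by blast
next
  assume xy: "(x, y) \<in> r"
  have disj: "C \<inter> D = {}" using quot_disjoint assms by blast
  then have "(y, x) \<notin> r" using xy le_antisym x y by blast
  then have "\<forall>c\<in>C. \<forall>d\<in>D. (c, d) \<in> r"
    using chain_intervals_disjoint[OF quot_interval[OF C] quot_interval[OF D] disj] x y by blast
  then show "(C, D) \<in> rXJ" unfolding quot_rel_def using C D by blast
qed

lemma quot_less_iff:
  assumes "C \<in> XJ" "D \<in> XJ" "C \<noteq> D" "x \<in> C" "y \<in> D"
  shows "order_lt rXJ C D \<longleftrightarrow> order_lt r x y"
  using quot_rel_iff[OF assms] quot_disjoint[OF assms(1-3)] assms(3-5)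
  unfolding order_lt_def by blast

lemma quot_rel_members:
  assumes "C \<in> XJ" "D \<in> XJ" "x \<in> C" "y \<in> D"
  shows "(C, D) \<in> rXJ \<longleftrightarrow> C = D \<or> (x, y) \<in> r"
  using quot_rel_iff[OF assms(1,2) _ assms(3,4)] assms(1,2) unfolding quot_rel_def by blast

lemma chain_quot: "chain XJ rXJ"
proof
  have member: "\<exists>x. x \<in> C \<and> x \<in> X" if "C \<in> XJ" for C
    using quot_nonempty[OF that] quot_subset[OF that] by blast
  have field: "rXJ \<subseteq> XJ \<times> XJ" unfolding quot_rel_def by blast
  have "refl_on XJ rXJ" unfolding refl_on_def quot_rel_def using field by blast
  moreover have "trans rXJ"
  proof (rule transI)
    fix C D E assume CD: "(C, D) \<in> rXJ" and DE: "(D, E) \<in> rXJ"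
    then have Q: "C \<in> XJ" "D \<in> XJ" "E \<in> XJ" using field by auto
    obtain c d e where "c \<in> C" "d \<in> D" "e \<in> E" using Q member by meson
    then show "(C, E) \<in> rXJ" using quot_rel_members Q CD DE le_trans by metis
  qed
  moreover have "antisym rXJ"
  proof (rule antisymI)
    fix C D assume CD: "(C, D) \<in> rXJ" and DC: "(D, C) \<in> rXJ"
    then have Q: "C \<in> XJ" "D \<in> XJ" using field by auto
    obtain c d where "c \<in> C" "d \<in> D" using Q member by meson
    then show "C = D" using quot_rel_members Q CD DC le_antisym quot_disjoint by (metis disjoint_iff)
  qed
  moreover have "total_on XJ rXJ"
  proof (rule total_onI)
    fix C D assume Q: "C \<in> XJ" "D \<in> XJ"
    obtain c d where "c \<in> C" "d \<in> D" "c \<in> X" "d \<in> X" using Q member by meson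
    then show "(C, D) \<in> rXJ \<or> (D, C) \<in> rXJ" using quot_rel_members Q le_total by metis
  qed
  ultimately show "linear_order_on XJ rXJ"
    unfolding order_on_defs using field by blast
qed

end

section \<open>Aut X as a wreath product\<close>

context regular_quotient
begin

interpretation Q: chain XJ rXJ by (rule chain_quot)
interpretation J: chain J rJ by (rule chain_J)

definition shift :: "'a set \<Rightarrow> 'a \<Rightarrow> 'a" where
  "shift C = (SOME s. s \<in> G \<and> s ` J = C)"

definition coord :: "'a \<Rightarrow> 'a" where
  "coord x = aut_inv X (shift (block x)) x"

lemma shift: assumes "C \<in> XJ" shows "shift C \<in> G" "shift C ` J = C"
proof -
  obtain x g where "x \<in> X" "C = block x" "g \<in> G" "g x \<in> J"
    using assms exists_Aut_into_J by (metis quot_carrierE)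
  then have "\<exists>s. s \<in> G \<and> s ` J = C"
    using block_eq_image aut_inv_in_Aut by metis
  then show "shift C \<in> G" "shift C ` J = C"
    unfolding shift_def using someI_ex by (metis (mono_tags, lifting))+
qed

lemma shift_in_quot: "C \<in> XJ \<Longrightarrow> j \<in> J \<Longrightarrow> shift C j \<in> C"
  using shift(2) by blast

lemma coord_in_J: "x \<in> X \<Longrightarrow> coord x \<in> J"
  using aut_inv_image[OF shift(1,2)] block_in_quot block_self unfolding coord_def by blast

lemma shift_coord: "x \<in> X \<Longrightarrow> shift (block x) (coord x) = x"
  unfolding coord_def using apply_aut_inv[OF shift(1)] block_in_quot by blast

lemma coord_shift: "C \<in> XJ \<Longrightarrow> j \<in> J \<Longrightarrow> coord (shift C j) = j"
  unfolding coord_def using block_of_member shift_in_quot aut_inv_apply[OF shift(1)] by metis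

definition quot_aut :: "('a \<Rightarrow> 'a) \<Rightarrow> 'a set \<Rightarrow> 'a set" where
  "quot_aut g = (\<lambda>C. if C \<in> XJ then g ` C else C)"

lemma quot_aut_block: "g \<in> G \<Longrightarrow> x \<in> X \<Longrightarrow> quot_aut g (block x) = block (g x)"
  unfolding quot_aut_def using block_in_quot block_image by simp

lemma quot_aut_in_quot: "g \<in> G \<Longrightarrow> C \<in> XJ \<Longrightarrow> quot_aut g C \<in> XJ"
  using quot_aut_block Aut_in_carrier block_in_quot by (metis quot_carrierE)

lemma quot_aut_comp:
  assumes "g \<in> G" "h \<in> G" shows "quot_aut (g \<circ> h) = quot_aut g \<circ> quot_aut h"
proof
  fix C
  show "quot_aut (g \<circ> h) C = (quot_aut g \<circ> quot_aut h) C"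
    using quot_aut_in_quot[OF assms(2), of C] unfolding quot_aut_def by (simp add: image_comp)
qed

lemma quot_aut_id: "quot_aut id = id"
  unfolding quot_aut_def by (rule ext) simp

lemma quot_aut_in_Aut: assumes g: "g \<in> G" shows "quot_aut g \<in> Aut XJ rXJ"
proof (rule Q.AutI)
  have inverse: "quot_aut g (quot_aut (aut_inv X g) C) = C" for C
    using quot_aut_comp[OF g aut_inv_in_Aut[OF g]] comp_aut_inv[OF g] quot_aut_id
    by (metis comp_apply id_apply)
  then show "\<exists>C\<in>XJ. quot_aut g C = D" if "D \<in> XJ" for D
    using quot_aut_in_quot[OF aut_inv_in_Aut[OF g] that] by blast
  show "order_lt rXJ (quot_aut g C) (quot_aut g D)"
    if CD: "C \<in> XJ" "D \<in> XJ" "order_lt rXJ C D" for C D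
  proof -
    obtain x y where xy: "x \<in> X" "C = block x" "y \<in> X" "D = block y"
      using CD(1,2) by (metis quot_carrierE)
    then have "C \<noteq> D" "order_lt r x y"
      using CD quot_less_iff block_self unfolding order_lt_def by (metis, metis)
    moreover have "quot_aut g C \<noteq> quot_aut g D"
      using inverse quot_aut_comp[OF aut_inv_in_Aut[OF g] g] aut_inv_comp[OF g] quot_aut_id calculation(1)
      by (metis comp_apply id_apply)
    ultimately show ?thesis
      using xy quot_less_iff[OF block_in_quot block_in_quot _ block_self block_self]
        Aut_less_iff[OF g] Aut_in_carrier[OF g] quot_aut_block[OF g] by metis
  qed
qed (use quot_aut_in_quot[OF g] in \<open>auto simp: quot_aut_def\<close>)

definition Aut_family :: "('a set \<Rightarrow> 'a \<Rightarrow> 'a) \<Rightarrow> bool" where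
  "Aut_family j \<longleftrightarrow> (\<forall>C\<in>XJ. j C \<in> Aut J rJ)"

(* The element of the wreath product acting on the blocks by h and inside the block C by j C,
   read in the coordinates given by shift. *)
definition lift :: "('a set \<Rightarrow> 'a set) \<Rightarrow> ('a set \<Rightarrow> 'a \<Rightarrow> 'a) \<Rightarrow> 'a \<Rightarrow> 'a" where
  "lift h j x = (if x \<in> X then shift (h (block x)) (j (block x) (coord x)) else x)"

lemma coord_less_iff:
  "x \<in> X \<Longrightarrow> y \<in> X \<Longrightarrow> block x = block y \<Longrightarrow> order_lt r (coord x) (coord y) \<longleftrightarrow> order_lt r x y"
  unfolding coord_def using Aut_less_iff[OF aut_inv_in_Aut[OF shift(1)]] block_in_quot by metis

lemma Aut_familyD: "Aut_family j \<Longrightarrow> C \<in> XJ \<Longrightarrow> j C \<in> Aut J rJ"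
  unfolding Aut_family_def by blast

lemma lift_in_block:
  assumes h: "h \<in> Aut XJ rXJ" and j: "Aut_family j" and x: "x \<in> X"
  shows "lift h j x \<in> h (block x)"
  unfolding lift_def using x coord_in_J[OF x] J.Aut_in_carrier[OF Aut_familyD[OF j block_in_quot[OF x]]]
    shift_in_quot Q.Aut_in_carrier[OF h block_in_quot[OF x]] by simp

lemma block_lift:
  "h \<in> Aut XJ rXJ \<Longrightarrow> Aut_family j \<Longrightarrow> x \<in> X \<Longrightarrow> block (lift h j x) = h (block x)"
  using block_of_member lift_in_block Q.Aut_in_carrier block_in_quot by blast

lemma coord_lift:
  assumes h: "h \<in> Aut XJ rXJ" and j: "Aut_family j" and x: "x \<in> X"
  shows "coord (lift h j x) = j (block x) (coord x)"
  unfolding lift_def using x coord_shift Q.Aut_in_carrier[OF h block_in_quot[OF x]]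
    J.Aut_in_carrier[OF Aut_familyD[OF j block_in_quot[OF x]] coord_in_J[OF x]] by simp

lemma lift_outside: "x \<notin> X \<Longrightarrow> lift h j x = x"
  unfolding lift_def by simp

lemma lift_in_carrier:
  "h \<in> Aut XJ rXJ \<Longrightarrow> Aut_family j \<Longrightarrow> x \<in> X \<Longrightarrow> lift h j x \<in> X"
  using lift_in_block quot_subset Q.Aut_in_carrier block_in_quot by blast

lemma lift_surj:
  assumes h: "h \<in> Aut XJ rXJ" and j: "Aut_family j" and y: "y \<in> X"
  shows "\<exists>x\<in>X. lift h j x = y"
proof -
  define C where "C = aut_inv XJ h (block y)"
  have C: "C \<in> XJ" "h C = block y"
    unfolding C_def using Q.aut_inv_in_carrier[OF h] Q.apply_aut_inv[OF h] block_in_quot[OF y] by auto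
  obtain w where w: "w \<in> J" "j C w = coord y"
    using J.Aut_image[OF Aut_familyD[OF j C(1)]] coord_in_J[OF y] by (metis imageE)
  have "shift C w \<in> X" "block (shift C w) = C" "coord (shift C w) = w"
    using shift_in_quot[OF C(1) w(1)] quot_subset[OF C(1)] block_of_member[OF C(1)] coord_shift[OF C(1) w(1)]
    by auto
  then show ?thesis using C w shift_coord[OF y] unfolding lift_def by (intro bexI[of _ "shift C w"]) auto
qed

lemma lift_strict_mono:
  assumes h: "h \<in> Aut XJ rXJ" and j: "Aut_family j"
    and xy: "x \<in> X" "y \<in> X" "order_lt r x y"
  shows "order_lt r (lift h j x) (lift h j y)"
proof (cases "block x = block y")
  case True
  define C where "C = block x"
  have C: "C \<in> XJ" "j C \<in> Aut J rJ" "block y = C"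
    using block_in_quot[OF xy(1)] Aut_familyD[OF j] True unfolding C_def by auto
  have "order_lt r (coord x) (coord y)" using coord_less_iff xy True by blast
  then have "order_lt r (j C (coord x)) (j C (coord y))"
    using J.Aut_less_iff[OF C(2)] J.Aut_in_carrier[OF C(2)] coord_in_J xy restrict_rel_less_iff
    by metis
  then show ?thesis
    using coord_less_iff[OF lift_in_carrier[OF h j xy(1)] lift_in_carrier[OF h j xy(2)]]
      coord_lift[OF h j] block_lift[OF h j] xy C unfolding C_def by metis
next
  case False
  then have "order_lt rXJ (block x) (block y)"
    using quot_less_iff block_in_quot block_self xy by blast
  then have "order_lt rXJ (h (block x)) (h (block y))"
    using Q.Aut_less_iff[OF h] block_in_quot xy by blast
  then show ?thesis
    using quot_less_iff[OF _ _ _ lift_in_block[OF h j xy(1)] lift_in_block[OF h j xy(2)]]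
      Q.Aut_in_carrier[OF h] block_in_quot xy unfolding order_lt_def by blast
qed

lemma lift_in_Aut: "h \<in> Aut XJ rXJ \<Longrightarrow> Aut_family j \<Longrightarrow> lift h j \<in> G"
  by (rule AutI) (simp_all add: lift_in_carrier lift_surj lift_strict_mono lift_outside)

lemma quot_aut_lift:
  assumes h: "h \<in> Aut XJ rXJ" and j: "Aut_family j"
  shows "quot_aut (lift h j) = h"
proof
  fix C
  show "quot_aut (lift h j) C = h C"
  proof (cases "C \<in> XJ")
    case True
    then show ?thesis
      using quot_aut_block[OF lift_in_Aut[OF h j]] block_lift[OF h j] by (metis quot_carrierE)
  qed (simp add: quot_aut_def Q.Aut_fixes_outside[OF h])
qed

lemma lift_cong: "(\<And>C. C \<in> XJ \<Longrightarrow> j C = j' C) \<Longrightarrow> lift h j = lift h j'"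
  unfolding lift_def using block_in_quot by (intro ext) simp

lemma lift_comp:
  assumes h': "h' \<in> Aut XJ rXJ" and j': "Aut_family j'"
  shows "lift h j \<circ> lift h' j' = lift (h \<circ> h') (\<lambda>C. j (h' C) \<circ> j' C)"
proof
  fix x
  show "(lift h j \<circ> lift h' j') x = lift (h \<circ> h') (\<lambda>C. j (h' C) \<circ> j' C) x"
  proof (cases "x \<in> X")
    case True
    have "lift h' j' x \<in> X"
      using lift_in_Aut[OF h' j'] Aut_in_carrier True by blast
    then show ?thesis
      using True block_lift[OF h' j'] coord_lift[OF h' j'] unfolding lift_def by simp
  qed (simp add: lift_outside)
qed

definition fibre_aut :: "('a \<Rightarrow> 'a) \<Rightarrow> 'a set \<Rightarrow> 'a \<Rightarrow> 'a" where
  "fibre_aut g C = id_outside J (aut_inv X (shift (quot_aut g C)) \<circ> g \<circ> shift C)"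

lemma fibre_aut_family: assumes g: "g \<in> G" shows "Aut_family (fibre_aut g)"
  unfolding Aut_family_def fibre_aut_def
proof
  fix C assume C: "C \<in> XJ"
  have gC: "quot_aut g C \<in> XJ" "g ` C = quot_aut g C"
    using quot_aut_in_quot[OF g C] C unfolding quot_aut_def by auto
  have "(aut_inv X (shift (quot_aut g C)) \<circ> g \<circ> shift C) ` J =
      aut_inv X (shift (quot_aut g C)) ` g ` shift C ` J"
    by (simp add: image_comp)
  then have "(aut_inv X (shift (quot_aut g C)) \<circ> g \<circ> shift C) ` J = J"
    using shift(2)[OF C] aut_inv_image[OF shift(1,2)[OF gC(1)]] gC(2) by simp
  then show "id_outside J (aut_inv X (shift (quot_aut g C)) \<circ> g \<circ> shift C) \<in> Aut J rJ"
    using id_outside_in_Aut[OF J_subset] Aut_comp aut_inv_in_Aut shift(1) g C gC(1) by metis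
qed

lemma lift_fibre_aut: assumes g: "g \<in> G" shows "lift (quot_aut g) (fibre_aut g) = g"
proof
  fix x
  show "lift (quot_aut g) (fibre_aut g) x = g x"
  proof (cases "x \<in> X")
    case True
    then show ?thesis
      unfolding lift_def fibre_aut_def id_outside_def
      using coord_in_J shift_coord apply_aut_inv[OF shift(1)] quot_aut_in_quot[OF g] block_in_quot
      by simp
  qed (simp add: lift_outside Aut_fixes_outside[OF g])
qed

lemma lift_in_basic_nbhd:
  assumes "h \<in> Aut XJ rXJ" "Aut_family j" "A \<subseteq> X"
    and "\<forall>a\<in>A. h (block a) = block a \<and> shift (block a) (j (block a) (coord a)) \<in> W a"
  shows "lift h j \<in> basic_nbhd X r A W"
  using assms lift_in_Aut unfolding basic_nbhd_def lift_def by auto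

lemma Aut_family_comp: "Aut_family j \<Longrightarrow> h \<in> Aut XJ rXJ \<Longrightarrow> Aut_family (\<lambda>C. j (h C))"
  unfolding Aut_family_def using Q.Aut_in_carrier by blast

lemma lift_comp3:
  assumes u1: "u1 \<in> Aut XJ rXJ" and f: "f \<in> Aut XJ rXJ" and u2: "u2 \<in> Aut XJ rXJ"
    and p: "Aut_family p" and q: "Aut_family q" and s: "Aut_family s"
  shows "lift u1 (\<lambda>C. p (aut_inv XJ f C)) \<circ> lift f q \<circ> lift u2 (\<lambda>C. s (u2 C)) =
    lift (u1 \<circ> f \<circ> u2) (\<lambda>C. p (u2 C) \<circ> q (u2 C) \<circ> s (u2 C))"
proof -
  have qs: "Aut_family (\<lambda>C. q (u2 C) \<circ> s (u2 C))"
    using Aut_family_comp[OF q u2] Aut_family_comp[OF s u2] J.Aut_comp unfolding Aut_family_def by blast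
  have "lift f q \<circ> lift u2 (\<lambda>C. s (u2 C)) = lift (f \<circ> u2) (\<lambda>C. q (u2 C) \<circ> s (u2 C))"
    using lift_comp[OF u2 Aut_family_comp[OF s u2]] by simp
  then show ?thesis
    using lift_comp[OF Q.Aut_comp[OF f u2] qs, of u1] Q.aut_inv_apply[OF f]
    by (simp add: comp_assoc)
qed

lemma fibrewise_double_cosets:
  assumes j: "Aut_family j" and cover: "Aut J rJ \<subseteq> double_cosets U F"
    and U: "U \<subseteq> Aut J rJ" and F: "F \<subseteq> Aut J rJ"
  obtains p q s where "Aut_family p" "Aut_family q" "Aut_family s"
    and "\<And>C. C \<in> XJ \<Longrightarrow> j C = p C \<circ> q C \<circ> s C"
    and "\<And>C. C \<in> XJ \<Longrightarrow> C \<in> D \<Longrightarrow> p C \<in> U \<and> q C \<in> F \<and> s C \<in> U"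
    and "\<And>C. C \<notin> D \<Longrightarrow> q C = id"
proof -
  have "\<forall>C\<in>XJ. \<exists>t. j C = fst t \<circ> fst (snd t) \<circ> snd (snd t) \<and> fst t \<in> U \<and> fst (snd t) \<in> F \<and> snd (snd t) \<in> U"
    using cover Aut_familyD[OF j] by (fastforce elim!: double_cosetsE)
  then obtain t where t: "\<And>C. C \<in> XJ \<Longrightarrow>
      j C = fst (t C) \<circ> fst (snd (t C)) \<circ> snd (snd (t C)) \<and>
      fst (t C) \<in> U \<and> fst (snd (t C)) \<in> F \<and> snd (snd (t C)) \<in> U"
    by metis
  define p where "p C = (if C \<in> D then fst (t C) else id)" for C
  define q where "q C = (if C \<in> D then fst (snd (t C)) else id)" for C
  define s where "s C = (if C \<in> D then snd (snd (t C)) else j C)" for C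
  show thesis
  proof (rule that[of p q s])
    show "Aut_family p" "Aut_family q" "Aut_family s"
      using t U F Aut_familyD[OF j] J.id_in_Aut unfolding Aut_family_def p_def q_def s_def by auto
  qed (use t in \<open>auto simp: p_def q_def s_def\<close>)
qed

(* Only the blocks in D are seen by the basic neighbourhood on either side of f, so off D the
   middle factor can be taken to be the identity; this keeps the middle factors finite. *)
lemma Aut_in_lifted_double_cosets:
  assumes g: "g \<in> G" and A: "A \<subseteq> X"
    and u1: "u1 \<in> basic_nbhd XJ rXJ (block ` A) (\<lambda>C. {C})" and f: "f \<in> Aut XJ rXJ"
    and u2: "u2 \<in> basic_nbhd XJ rXJ (block ` A) (\<lambda>C. {C})" and g_quot: "quot_aut g = u1 \<circ> f \<circ> u2"
    and cover: "Aut J rJ \<subseteq> double_cosets U F" and U: "U \<subseteq> Aut J rJ" and F: "F \<subseteq> Aut J rJ"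
    and U_W: "\<And>k a. k \<in> U \<Longrightarrow> a \<in> A \<Longrightarrow> shift (block a) (k (coord a)) \<in> W a"
  defines "D \<equiv> block ` A \<union> aut_inv XJ f ` block ` A"
  obtains q where "Aut_family q" "\<forall>C\<in>D. q C \<in> F" "\<forall>C. C \<notin> D \<longrightarrow> q C = id"
    and "g \<in> double_cosets (basic_nbhd X r A W) {lift f q}"
proof -
  have u: "u1 \<in> Aut XJ rXJ" "u2 \<in> Aut XJ rXJ" "\<forall>a\<in>A. u1 (block a) = block a \<and> u2 (block a) = block a"
    using u1 u2 unfolding basic_nbhd_def by auto
  have D: "D \<subseteq> XJ" unfolding D_def using A block_in_quot Q.aut_inv_in_carrier[OF f] by auto
  obtain p q s where fam: "Aut_family p" "Aut_family q" "Aut_family s"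
    and decomp: "\<And>C. C \<in> XJ \<Longrightarrow> fibre_aut g (aut_inv XJ u2 C) = p C \<circ> q C \<circ> s C"
    and in_D: "\<And>C. C \<in> XJ \<Longrightarrow> C \<in> D \<Longrightarrow> p C \<in> U \<and> q C \<in> F \<and> s C \<in> U"
    and out_D: "\<And>C. C \<notin> D \<Longrightarrow> q C = id"
    using fibrewise_double_cosets[OF Aut_family_comp[OF fibre_aut_family[OF g] Q.aut_inv_in_Aut[OF u(2)]]
        cover U F] by metis
  have "g = lift (u1 \<circ> f \<circ> u2) (fibre_aut g)"
    using lift_fibre_aut[OF g] g_quot by simp
  also have "\<dots> = lift (u1 \<circ> f \<circ> u2) (\<lambda>C. p (u2 C) \<circ> q (u2 C) \<circ> s (u2 C))"
    using decomp Q.Aut_in_carrier[OF u(2)] Q.aut_inv_apply[OF u(2)] by (intro lift_cong) metis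
  also have "\<dots> = lift u1 (\<lambda>C. p (aut_inv XJ f C)) \<circ> lift f q \<circ> lift u2 (\<lambda>C. s (u2 C))"
    using lift_comp3[OF u(1) f u(2) fam] by simp
  finally have g_eq: "g = lift u1 (\<lambda>C. p (aut_inv XJ f C)) \<circ> lift f q \<circ> lift u2 (\<lambda>C. s (u2 C))" .
  have "p (aut_inv XJ f (block a)) \<in> U" "s (block a) \<in> U" if "a \<in> A" for a
    using in_D[of "aut_inv XJ f (block a)"] in_D[of "block a"] D that unfolding D_def by blast+
  then have v1: "lift u1 (\<lambda>C. p (aut_inv XJ f C)) \<in> basic_nbhd X r A W"
    and v2: "lift u2 (\<lambda>C. s (u2 C)) \<in> basic_nbhd X r A W"
    using lift_in_basic_nbhd[OF u(1) Aut_family_comp[OF fam(1) Q.aut_inv_in_Aut[OF f]] A]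
      lift_in_basic_nbhd[OF u(2) Aut_family_comp[OF fam(3) u(2)] A] u(3) U_W by simp_all
  show thesis
  proof (rule that[OF fam(2)])
    show "\<forall>C\<in>D. q C \<in> F" using in_D D by blast
    show "g \<in> double_cosets (basic_nbhd X r A W) {lift f q}"
      using v1 v2 g_eq by (intro double_cosetsI) auto
  qed (use out_D in blast)
qed

lemma restrict_double_coset:
  assumes k: "k \<in> Aut J rJ" and u: "u \<in> G" "u ` J = J" and v: "v ` J = J" and k_eq: "k = u \<circ> f \<circ> v"
  shows "f ` J = J" and "k = id_outside J u \<circ> id_outside J f \<circ> id_outside J v"
proof -
  have "(u \<circ> f \<circ> v) ` J = u ` f ` v ` J" by (simp add: image_comp)
  then have "u ` f ` J = u ` J" using J.Aut_image[OF k] u(2) v unfolding k_eq by simp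
  then show f: "f ` J = J" using Aut_inj[OF u(1)] by (simp add: inj_image_eq_iff)
  have "k = id_outside J k"
    using J.Aut_fixes_outside[OF k] unfolding id_outside_def by auto
  then show "k = id_outside J u \<circ> id_outside J f \<circ> id_outside J v"
    using id_outside_comp[of v J "u \<circ> f"] id_outside_comp[of f J u] f v unfolding k_eq by simp
qed

lemma quot_aut_fixes_blocks:
  assumes u: "u \<in> basic_nbhd X r A block" and A: "A \<subseteq> X"
  shows "quot_aut u \<in> basic_nbhd XJ rXJ (block ` A) (\<lambda>C. {C})"
proof -
  have uG: "u \<in> G" using u unfolding basic_nbhd_def by blast
  have "quot_aut u (block a) = block a" if a: "a \<in> A" for a
  proof -
    have aX: "a \<in> X" and ua: "u a \<in> block a" using u a A unfolding basic_nbhd_def by auto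
    show ?thesis using quot_aut_block[OF uG aX] block_eq_block[OF aX ua] by simp
  qed
  then show ?thesis using quot_aut_in_Aut[OF uG] unfolding basic_nbhd_def by auto
qed

definition middle_factors ::
    "('a set \<Rightarrow> 'a set) set \<Rightarrow> (('a set \<Rightarrow> 'a set) \<Rightarrow> 'a set set) \<Rightarrow> ('a \<Rightarrow> 'a) set \<Rightarrow> ('a \<Rightarrow> 'a) set" where
  "middle_factors FQ D FJ = (\<Union>f\<in>FQ. (\<lambda>q. lift f (\<lambda>C. if C \<in> D f then q C else id)) ` PiE (D f) (\<lambda>_. FJ))"

lemma finite_middle_factors:
  "finite FQ \<Longrightarrow> (\<And>f. finite (D f)) \<Longrightarrow> finite FJ \<Longrightarrow> finite (middle_factors FQ D FJ)"
  unfolding middle_factors_def by (auto intro!: finite_PiE)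

lemma middle_factors_subset_Aut:
  assumes "FQ \<subseteq> Aut XJ rXJ" "FJ \<subseteq> Aut J rJ"
  shows "middle_factors FQ D FJ \<subseteq> G"
proof -
  have "lift f (\<lambda>C. if C \<in> D f then q C else id) \<in> G"
    if "f \<in> FQ" "q \<in> PiE (D f) (\<lambda>_. FJ)" for f q
    using that assms J.id_in_Aut by (intro lift_in_Aut) (auto simp: Aut_family_def PiE_iff)
  then show ?thesis unfolding middle_factors_def by blast
qed

lemma lift_in_middle_factors:
  assumes "f \<in> FQ" "\<forall>C\<in>D f. q C \<in> FJ" "\<forall>C. C \<notin> D f \<longrightarrow> q C = id"
  shows "lift f q \<in> middle_factors FQ D FJ"
proof -
  have "(\<lambda>C. if C \<in> D f then restrict q (D f) C else id) = q" using assms(3) by auto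
  then have "lift f q \<in> (\<lambda>q. lift f (\<lambda>C. if C \<in> D f then q C else id)) ` PiE (D f) (\<lambda>_. FJ)"
    using assms(2) by (intro image_eqI[of _ _ "restrict q (D f)"]) auto
  then show ?thesis using assms(1) unfolding middle_factors_def by blast
qed

end

section \<open>Transfer of Roelcke precompactness\<close>

(* What the transfer uses about the topology on the points: it holds for the order topology
   (giving tau_p) and for the discrete topology (giving the permutation topology). *)
locale quotient_nbhds = regular_quotient +
  fixes T :: "'a set \<Rightarrow> 'a rel \<Rightarrow> 'a \<Rightarrow> 'a set \<Rightarrow> bool"
  assumes nbhd_mono: "T S' r' a V \<Longrightarrow> V \<subseteq> V' \<Longrightarrow> T S' r' a V'"
    and nbhd_Int: "chain S' r' \<Longrightarrow> T S' r' a V \<Longrightarrow> T S' r' a V' \<Longrightarrow> T S' r' a (V \<inter> V')"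
    and nbhd_image: "g \<in> Aut X r \<Longrightarrow> T X r a V \<Longrightarrow> T X r (g a) (g ` V)"
    and nbhd_restrict: "b \<in> J \<Longrightarrow> T X r b V \<Longrightarrow> T J (restrict_rel r J) b (V \<inter> J)"
    and nbhd_extend: "T J (restrict_rel r J) b V \<Longrightarrow> T X r b (V \<union> (X - J))"
    and nbhd_J: "x \<in> J \<Longrightarrow> T X r x J"
begin

interpretation Q: chain XJ rXJ by (rule chain_quot)
interpretation J: chain J rJ by (rule chain_J)

lemma nbhd_extend_Int_J: "a \<in> J \<Longrightarrow> T J rJ a V \<Longrightarrow> T X r a (V \<inter> J)"
proof -
  assume "a \<in> J" "T J rJ a V"
  then have "T X r a ((V \<union> (X - J)) \<inter> J)"
    using nbhd_Int[OF chain_axioms nbhd_extend[of a V] nbhd_J[of a]] by blast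
  moreover have "(V \<union> (X - J)) \<inter> J \<subseteq> V \<inter> J" by blast
  ultimately show ?thesis by (rule nbhd_mono)
qed

lemma nbhd_INT_J:
  assumes "finite I" "I \<noteq> {}" "\<forall>i\<in>I. T J rJ b (V i)"
  shows "T J rJ b (\<Inter>i\<in>I. V i)"
  using assms by (induction I rule: finite_ne_induct) (simp_all add: nbhd_Int[OF chain_J])

lemma nbhd_block: assumes x: "x \<in> X" shows "T X r x (block x)"
proof -
  have "T X r (shift (block x) (coord x)) (shift (block x) ` J)"
    using nbhd_image[OF shift(1) nbhd_J[OF coord_in_J[OF x]]] block_in_quot[OF x] by blast
  then show ?thesis using shift_coord[OF x] shift(2) block_in_quot[OF x] by simp
qed

lemma nbhd_transport:
  assumes A: "finite A" "A \<subseteq> X" "\<forall>a\<in>A. T X r a (W a)"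
  obtains WJ where "\<forall>b\<in>coord ` A. T J rJ b (WJ b)"
    and "\<And>k a. k \<in> basic_nbhd J rJ (coord ` A) WJ \<Longrightarrow> a \<in> A \<Longrightarrow> shift (block a) (k (coord a)) \<in> W a"
proof -
  define V where "V a = {y \<in> J. shift (block a) y \<in> W a}" for a
  define WJ where "WJ b = (\<Inter>a\<in>{a \<in> A. coord a = b}. V a)" for b
  have V: "T J rJ (coord a) (V a)" if a: "a \<in> A" for a
  proof -
    have C: "block a \<in> XJ" and aX: "a \<in> X" using a A(2) block_in_quot by auto
    note s = shift(1)[OF C]
    have "T X r (coord a) (aut_inv X (shift (block a)) ` W a)"
      using nbhd_image[OF aut_inv_in_Aut[OF s]] A(3) a unfolding coord_def by blast
    then have "T J rJ (coord a) (aut_inv X (shift (block a)) ` W a \<inter> J)"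
      using nbhd_restrict coord_in_J[OF aX] by blast
    moreover have "aut_inv X (shift (block a)) ` W a \<inter> J \<subseteq> V a"
      unfolding V_def using apply_aut_inv[OF s] by auto
    ultimately show ?thesis by (rule nbhd_mono)
  qed
  have "T J rJ b (WJ b)" if "b \<in> coord ` A" for b
    unfolding WJ_def using that A(1) V by (intro nbhd_INT_J) force+
  moreover have "shift (block a) (k (coord a)) \<in> W a"
    if "k \<in> basic_nbhd J rJ (coord ` A) WJ" "a \<in> A" for k a
    using that unfolding basic_nbhd_def WJ_def V_def by blast
  ultimately show thesis using that by blast
qed

lemma RP_interval:
  assumes RP: "roelcke_precompact_basic T X r"
  shows "roelcke_precompact_basic T J rJ"
  unfolding roelcke_precompact_basic_def
proof (intro allI impI, elim conjE)
  fix A W assume A: "finite A" "A \<subseteq> J" "\<forall>a\<in>A. T J rJ a (W a)"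
  obtain x0 where x0: "x0 \<in> J" using J_nonempty by blast
  \<comment> \<open>The extra point x0 makes every element of the neighbourhood below stabilise J.\<close>
  define W' where "W' a = (if a \<in> A then W a else X) \<inter> J" for a
  have "T X r a (W' a)" if "a \<in> insert x0 A" for a
    using that nbhd_extend_Int_J A(2,3) nbhd_J[OF x0] J_subset unfolding W'_def
    by (cases "a \<in> A") (auto simp: Int_absorb1)
  moreover have "finite (insert x0 A)" "insert x0 A \<subseteq> X" using A x0 J_subset by auto
  ultimately obtain F where F: "finite F" "F \<subseteq> G"
    and cover: "\<And>g. g \<in> G \<Longrightarrow> g \<in> double_cosets (basic_nbhd X r (insert x0 A) W') F"
    using roelcke_precompact_basicD[OF RP] by (metis finitely_many_double_cosetsE)
  have preserving: "u \<in> G" "u ` J = J" if "u \<in> basic_nbhd X r (insert x0 A) W'" for u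
    using that regular_image x0 unfolding basic_nbhd_def W'_def by auto
  have restricted: "id_outside J u \<in> basic_nbhd J rJ A W" if "u \<in> basic_nbhd X r (insert x0 A) W'" for u
    using that id_outside_in_Aut[OF J_subset preserving[OF that]] A(2)
    unfolding basic_nbhd_def W'_def id_outside_def by auto
  define F' where "F' = id_outside J ` {f \<in> F. f ` J = J}"
  have "k \<in> double_cosets (basic_nbhd J rJ A W) F'" if k: "k \<in> Aut J rJ" for k
  proof -
    obtain u f v where ufv: "u \<in> basic_nbhd X r (insert x0 A) W'" "f \<in> F"
      "v \<in> basic_nbhd X r (insert x0 A) W'" "k = u \<circ> f \<circ> v"
      using cover[OF Aut_interval_in_Aut[OF J_interval k]] by (rule double_cosetsE)
    note restrict = restrict_double_coset[OF k preserving[OF ufv(1)] preserving(2)[OF ufv(3)] ufv(4)]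
    then show ?thesis
      using restricted ufv unfolding F'_def by (intro double_cosetsI) auto
  qed
  moreover have "finite F'" "F' \<subseteq> Aut J rJ"
    using F id_outside_in_Aut[OF J_subset] unfolding F'_def by auto
  ultimately show "finitely_many_double_cosets (Aut J rJ) (basic_nbhd J rJ A W)"
    unfolding finitely_many_double_cosets_def by blast
qed

lemma RP_quotient:
  assumes RP: "roelcke_precompact_basic T X r"
  shows "RP_perm XJ rXJ"
  unfolding RP_perm_iff_stabilizers
proof (intro allI impI, elim conjE)
  fix AQ assume AQ: "finite AQ" "AQ \<subseteq> XJ"
  obtain x0 where x0: "x0 \<in> J" using J_nonempty by blast
  define A where "A = (\<lambda>C. shift C x0) ` AQ"
  have A: "finite A" "A \<subseteq> X" "\<forall>a\<in>A. T X r a (block a)" and AQ_eq: "block ` A = AQ"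
    using AQ shift_in_quot[OF _ x0] quot_subset nbhd_block block_of_member unfolding A_def
    by (auto simp: image_image) blast+
  obtain F where F: "finite F" "F \<subseteq> G"
    and cover: "\<And>g. g \<in> G \<Longrightarrow> g \<in> double_cosets (basic_nbhd X r A block) F"
    using roelcke_precompact_basicD[OF RP A] by (auto elim!: finitely_many_double_cosetsE)
  have "h \<in> double_cosets (basic_nbhd XJ rXJ AQ (\<lambda>C. {C})) (quot_aut ` F)"
    if h: "h \<in> Aut XJ rXJ" for h
  proof -
    have lift: "lift h (\<lambda>_. id) \<in> G"
      by (intro lift_in_Aut[OF h]) (simp add: Aut_family_def J.id_in_Aut)
    obtain u f v where ufv: "u \<in> basic_nbhd X r A block" "f \<in> F" "v \<in> basic_nbhd X r A block"
      "lift h (\<lambda>_. id) = u \<circ> f \<circ> v"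
      using cover[OF lift] by (rule double_cosetsE)
    then have "h = quot_aut u \<circ> quot_aut f \<circ> quot_aut v"
      using quot_aut_lift[OF h] quot_aut_comp Aut_comp F(2) basic_nbhd_subset_Aut J.id_in_Aut
      unfolding Aut_family_def by (metis subsetD)
    then show ?thesis
      using quot_aut_fixes_blocks[OF _ A(2)] ufv unfolding AQ_eq by (intro double_cosetsI) auto
  qed
  moreover have "finite (quot_aut ` F)" "quot_aut ` F \<subseteq> Aut XJ rXJ"
    using F quot_aut_in_Aut by auto
  ultimately show "finitely_many_double_cosets (Aut XJ rXJ) (basic_nbhd XJ rXJ AQ (\<lambda>C. {C}))"
    unfolding finitely_many_double_cosets_def by blast
qed

lemma RP_of_interval_quotient:
  assumes RPJ: "roelcke_precompact_basic T J rJ" and RPQ: "RP_perm XJ rXJ"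
  shows "roelcke_precompact_basic T X r"
  unfolding roelcke_precompact_basic_def
proof (intro allI impI, elim conjE)
  fix A W assume A: "finite A" "A \<subseteq> X" "\<forall>a\<in>A. T X r a (W a)"
  have "finitely_many_double_cosets (Aut XJ rXJ) (basic_nbhd XJ rXJ (block ` A) (\<lambda>C. {C}))"
    using RPQ A(1,2) block_in_quot unfolding RP_perm_iff_stabilizers by blast
  then obtain FQ where FQ: "finite FQ" "FQ \<subseteq> Aut XJ rXJ"
    and cover_Q: "\<And>h. h \<in> Aut XJ rXJ \<Longrightarrow> h \<in> double_cosets (basic_nbhd XJ rXJ (block ` A) (\<lambda>C. {C})) FQ"
    by (auto elim!: finitely_many_double_cosetsE)
  obtain WJ where WJ: "\<forall>b\<in>coord ` A. T J rJ b (WJ b)"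
    and WJ_W: "\<And>k a. k \<in> basic_nbhd J rJ (coord ` A) WJ \<Longrightarrow> a \<in> A \<Longrightarrow> shift (block a) (k (coord a)) \<in> W a"
    using nbhd_transport[OF A] by blast
  have "finitely_many_double_cosets (Aut J rJ) (basic_nbhd J rJ (coord ` A) WJ)"
    using roelcke_precompact_basicD[OF RPJ _ _ WJ] A(1,2) coord_in_J by blast
  then obtain FJ where FJ: "finite FJ" "FJ \<subseteq> Aut J rJ"
    and cover_J: "Aut J rJ \<subseteq> double_cosets (basic_nbhd J rJ (coord ` A) WJ) FJ"
    by (auto elim!: finitely_many_double_cosetsE)
  define D where "D f = block ` A \<union> aut_inv XJ f ` block ` A" for f
  have "g \<in> double_cosets (basic_nbhd X r A W) (middle_factors FQ D FJ)" if g: "g \<in> G" for g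
  proof -
    obtain u1 f u2 where u: "u1 \<in> basic_nbhd XJ rXJ (block ` A) (\<lambda>C. {C})" "f \<in> FQ"
      "u2 \<in> basic_nbhd XJ rXJ (block ` A) (\<lambda>C. {C})" "quot_aut g = u1 \<circ> f \<circ> u2"
      using cover_Q[OF quot_aut_in_Aut[OF g]] by (rule double_cosetsE)
    have f: "f \<in> Aut XJ rXJ" using u(2) FQ(2) by blast
    obtain q where "Aut_family q" and q: "\<forall>C\<in>D f. q C \<in> FJ" "\<forall>C. C \<notin> D f \<longrightarrow> q C = id"
      and g_in: "g \<in> double_cosets (basic_nbhd X r A W) {lift f q}"
      using g A(2) u(1) f u(3,4) cover_J basic_nbhd_subset_Aut FJ(2) WJ_W unfolding D_def
      by (rule Aut_in_lifted_double_cosets)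
    moreover have "lift f q \<in> middle_factors FQ D FJ" using u(2) q by (rule lift_in_middle_factors)
    ultimately show ?thesis by (auto elim!: double_cosetsE intro: double_cosetsI)
  qed
  moreover have "finite (middle_factors FQ D FJ)"
    using FQ(1) FJ(1) A(1) unfolding D_def by (intro finite_middle_factors) auto
  ultimately show "finitely_many_double_cosets G (basic_nbhd X r A W)"
    using middle_factors_subset_Aut[OF FQ(2) FJ(2)] unfolding finitely_many_double_cosets_def by blast
qed

lemma RP_iff_interval_quotient:
  "roelcke_precompact_basic T X r \<longleftrightarrow> roelcke_precompact_basic T J rJ \<and> RP_perm XJ rXJ"
  using RP_interval RP_quotient RP_of_interval_quotient by blast

end

lemma regular_quotientI:
  assumes "homogeneous_chain X r" "regular_interval X r J" "proper_interval X J"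
  shows "regular_quotient X r J"
  using assms unfolding homogeneous_chain_def by unfold_locales auto

lemma (in regular_quotient) quotient_nbhds_order: "quotient_nbhds X r J order_nbhd"
proof (intro quotient_nbhds.intro quotient_nbhds_axioms.intro)
  show "regular_quotient X r J" by (rule regular_quotient_axioms)
  show "order_nbhd S' r' a V'" if "order_nbhd S' r' a V" "V \<subseteq> V'" for S' r' a V V'
    using that by (rule order_nbhd_mono)
  show "order_nbhd S' r' a (V \<inter> V')" if "chain S' r'" "order_nbhd S' r' a V" "order_nbhd S' r' a V'"
    for S' r' a V V'
    using that(2,3) by (rule chain.order_nbhd_Int[OF that(1)])
  show "order_nbhd X r (g a) (g ` V)" if "g \<in> G" "order_nbhd X r a V" for g a V
    using that by (rule order_nbhd_image)
  show "order_nbhd J rJ b (V \<inter> J)" if "b \<in> J" "order_nbhd X r b V" for b V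
    using that by (rule order_nbhd_restrict[OF J_interval])
  show "order_nbhd X r b (V \<union> (X - J))" if "order_nbhd J rJ b V" for b V
    using that by (rule order_nbhd_extend[OF J_interval])
  show "order_nbhd X r x J" if "x \<in> J" for x
    using that by (rule order_nbhd_J)
qed

lemma (in regular_quotient) quotient_nbhds_perm: "quotient_nbhds X r J perm_nbhd"
  by unfold_locales (auto simp: perm_nbhd_def)

lemma RP_p_iff_interval_quotient:
  assumes "homogeneous_chain X r" "regular_interval X r J" "proper_interval X J"
  shows "RP_p X r \<longleftrightarrow> RP_p J (restrict_rel r J) \<and> RP_perm (quot_carrier X r J) (quot_rel X r J)"
  using quotient_nbhds.RP_iff_interval_quotient[OF regular_quotient.quotient_nbhds_order]
    regular_quotientI[OF assms] by (simp add: RP_p_iff_basic)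

lemma RP_perm_iff_interval_quotient:
  assumes "homogeneous_chain X r" "regular_interval X r J" "proper_interval X J"
  shows "RP_perm X r \<longleftrightarrow> RP_perm J (restrict_rel r J) \<and> RP_perm (quot_carrier X r J) (quot_rel X r J)"
  using quotient_nbhds.RP_iff_interval_quotient[OF regular_quotient.quotient_nbhds_perm]
    regular_quotientI[OF assms] by (simp add: RP_perm_iff_basic)

lemma iff_all_iff_ex:
  assumes "\<exists>x. P x \<and> P' x" and "\<forall>x. P x \<and> P' x \<longrightarrow> (Q \<longleftrightarrow> R x)"
  shows "(Q \<longleftrightarrow> (\<forall>x. P x \<and> P' x \<longrightarrow> R x)) \<and> (Q \<longleftrightarrow> (\<exists>x. P x \<and> P' x \<and> R x))"
  using assms by blast

theorem theorem5p2:
  fixes X :: "'a set" and r :: "'a rel"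
  assumes "homogeneous_chain X r"
    and "\<not> simple_chain X r"
  shows "(RP_p X r \<longleftrightarrow>
            (\<forall>J. regular_interval X r J \<and> proper_interval X J \<longrightarrow>
                 RP_p J (restrict_rel r J) \<and> RP_perm (quot_carrier X r J) (quot_rel X r J)))
       \<and> (RP_p X r \<longleftrightarrow>
            (\<exists>J. regular_interval X r J \<and> proper_interval X J \<and>
                 RP_p J (restrict_rel r J) \<and> RP_perm (quot_carrier X r J) (quot_rel X r J)))
       \<and> (RP_perm X r \<longleftrightarrow>
            (\<forall>J. regular_interval X r J \<and> proper_interval X J \<longrightarrow>
                 RP_perm J (restrict_rel r J) \<and> RP_perm (quot_carrier X r J) (quot_rel X r J)))
       \<and> (RP_perm X r \<longleftrightarrow>
            (\<exists>J. regular_interval X r J \<and> proper_interval X J \<and>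
                 RP_perm J (restrict_rel r J) \<and> RP_perm (quot_carrier X r J) (quot_rel X r J)))"
proof -
  have proper_regular: "\<exists>J. regular_interval X r J \<and> proper_interval X J"
    using assms unfolding simple_chain_def by blast
  have p: "\<forall>J. regular_interval X r J \<and> proper_interval X J \<longrightarrow>
      (RP_p X r \<longleftrightarrow> RP_p J (restrict_rel r J) \<and> RP_perm (quot_carrier X r J) (quot_rel X r J))"
    using RP_p_iff_interval_quotient[OF assms(1)] by blast
  have perm: "\<forall>J. regular_interval X r J \<and> proper_interval X J \<longrightarrow>
      (RP_perm X r \<longleftrightarrow> RP_perm J (restrict_rel r J) \<and> RP_perm (quot_carrier X r J) (quot_rel X r J))"
    using RP_perm_iff_interval_quotient[OF assms(1)] by blast
  show ?thesis
    using iff_all_iff_ex[OF proper_regular p] iff_all_iff_ex[OF proper_regular perm] by blast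
qed

end
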